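(* Let $\mathcal{H}$ be a complex Hilbert space and $T,W\in\mathcal{B}(\mathcal{H})$ with $W\geq0$. Then there exist $T_{lr},T_{ls}\in\mathcal{B}(\mathcal{H})$ such that $T=T_{lr}+T_{ls}$, $T_{lr}$ is $W$-left regular and $T_{ls}$ is $W$-left strongly singular.
   Context: $\mathcal{B}(\mathcal{H})$ is the set of bounded everywhere defined operators on $\mathcal{H}$; $S\geq0$ means $\langle Sf,f\rangle\geq0$ for all $f$. For non-negative $S,W\in\mathcal{B}(\mathcal{H})$: $S$ is $W$-absolutely continuous if $\langle Wf_n,f_n\rangle\to0$ and $\langle S(f_n-f_m),f_n-f_m\rangle\to0$ imply $\langle Sf_n,f_n\rangle\to0$; $S$ is $W$-singular if the only $Q\in\mathcal{B}(\mathcal{H})$ with $0\leq Q\leq S$ and $0\leq Q\leq W$ is $Q=0$. $M_l(T)$ is the set of non-negative $S_1\in\mathcal{B}(\mathcal{H})$ for which there is a non-negative $S_2\in\mathcal{B}(\mathcal{H})$ with $|\langle Tf,g\rangle|\leq\langle S_1f,f\rangle^{1/2}\langle S_2g,g\rangle^{1/2}$ for all $f,g\in\mathcal{H}$. $T$ is $W$-left regular if some $S_1\in M_l(T)$ is $W$-absolutely continuous, and $W$-left strongly singular if some $S_1\in M_l(T)$ is $W$-singular. *)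

theory Defs
  imports "HOL-Analysis.Analysis"
begin

class complex_vector = ab_group_add +
  fixes scaleC :: "complex \<Rightarrow> 'a \<Rightarrow> 'a"
  assumes scaleC_add_right: "scaleC a (x + y) = scaleC a x + scaleC a y"
    and scaleC_add_left: "scaleC (a + b) x = scaleC a x + scaleC b x"
    and scaleC_scaleC: "scaleC a (scaleC b x) = scaleC (a * b) x"
    and scaleC_one: "scaleC 1 x = x"

text \<open>Inner product, linear in the first and conjugate-linear in the second argument.\<close>
class complex_inner = complex_vector +
  fixes cinner :: "'a \<Rightarrow> 'a \<Rightarrow> complex"
  assumes cinner_add_left: "cinner (x + y) z = cinner x z + cinner y z"
    and cinner_scaleC_left: "cinner (scaleC a x) y = a * cinner x y"
    and cinner_commute: "cinner x y = cnj (cinner y x)"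
    and cinner_ge_zero: "Im (cinner x x) = 0 \<and> Re (cinner x x) \<ge> 0"
    and cinner_eq_zero_iff: "cinner x x = 0 \<longleftrightarrow> x = 0"
begin

definition cnorm :: "'a \<Rightarrow> real" where
  "cnorm x = sqrt (Re (cinner x x))"

end

class chilbert_space = complex_inner +
  assumes cauchy_convergent:
    "(\<forall>e>0. \<exists>N::nat. \<forall>m\<ge>N. \<forall>n\<ge>N. cnorm (X m - X n) < e) \<Longrightarrow>
     (\<exists>L. \<forall>e>0. \<exists>N::nat. \<forall>n\<ge>N. cnorm (X n - L) < e)"

definition bounded_op :: "('a::complex_inner \<Rightarrow> 'a) \<Rightarrow> bool" where
  "bounded_op T \<longleftrightarrow>
     (\<forall>x y. T (x + y) = T x + T y) \<and>
     (\<forall>a x. T (scaleC a x) = scaleC a (T x)) \<and>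
     (\<exists>K. \<forall>x. cnorm (T x) \<le> K * cnorm x)"

definition nonneg_op :: "('a::complex_inner \<Rightarrow> 'a) \<Rightarrow> bool" where
  "nonneg_op S \<longleftrightarrow> (\<forall>f. Im (cinner (S f) f) = 0 \<and> Re (cinner (S f) f) \<ge> 0)"

definition qform :: "('a::complex_inner \<Rightarrow> 'a) \<Rightarrow> 'a \<Rightarrow> real" where
  "qform S f = Re (cinner (S f) f)"

definition abs_continuous :: "('a::complex_inner \<Rightarrow> 'a) \<Rightarrow> ('a \<Rightarrow> 'a) \<Rightarrow> bool" where
  "abs_continuous W S \<longleftrightarrow>
     (\<forall>f :: nat \<Rightarrow> 'a.
        (\<lambda>n. qform W (f n)) \<longlonglongrightarrow> 0 \<longrightarrow>
        (\<forall>e>0. \<exists>N. \<forall>n\<ge>N. \<forall>m\<ge>N. qform S (f n - f m) < e) \<longrightarrow>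
        (\<lambda>n. qform S (f n)) \<longlonglongrightarrow> 0)"

definition singular_op :: "('a::complex_inner \<Rightarrow> 'a) \<Rightarrow> ('a \<Rightarrow> 'a) \<Rightarrow> bool" where
  "singular_op W S \<longleftrightarrow>
     (\<forall>Q. bounded_op Q \<and> nonneg_op Q \<and> nonneg_op (\<lambda>x. S x - Q x)
          \<and> nonneg_op (\<lambda>x. W x - Q x) \<longrightarrow> Q = (\<lambda>x. 0))"

definition M_l :: "('a::complex_inner \<Rightarrow> 'a) \<Rightarrow> ('a \<Rightarrow> 'a) set" where
  "M_l T = {S1. bounded_op S1 \<and> nonneg_op S1 \<and>
     (\<exists>S2. bounded_op S2 \<and> nonneg_op S2 \<and>
        (\<forall>f g. cmod (cinner (T f) g) \<le> sqrt (qform S1 f) * sqrt (qform S2 g)))}"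

definition left_regular :: "('a::complex_inner \<Rightarrow> 'a) \<Rightarrow> ('a \<Rightarrow> 'a) \<Rightarrow> bool" where
  "left_regular W T \<longleftrightarrow> (\<exists>S1\<in>M_l T. abs_continuous W S1)"

definition left_strongly_singular :: "('a::complex_inner \<Rightarrow> 'a) \<Rightarrow> ('a \<Rightarrow> 'a) \<Rightarrow> bool" where
  "left_strongly_singular W T \<longleftrightarrow> (\<exists>S1\<in>M_l T. singular_op W S1)"

end

theory Submission
  imports Defs
begin

text \<open>Let E be the orthogonal projection onto ker W and P = I - E the projection onto its
  orthogonal complement, so that T = T P + T E. Every orthogonal projection R lies in
  \<open>M_l(T R)\<close>, because \<open>\<bar>\<langle>T R f, g\<rangle>\<bar> \<le> \<parallel>T\<parallel> \<parallel>R f\<parallel> \<parallel>g\<parallel>\<close> and \<open>\<parallel>R f\<parallel>\<^sup>2 = \<langle>R f, f\<rangle>\<close>.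
  E is W-singular: an operator Q with \<open>0 \<le> Q \<le> E\<close> and \<open>Q \<le> W\<close> has vanishing form on
  ker W (where W vanishes) and on its complement (where E vanishes), hence Q = 0.
  P is W-absolutely continuous: if \<open>\<langle>W f\<^sub>n, f\<^sub>n\<rangle> \<rightarrow> 0\<close> and \<open>P f\<^sub>n\<close> is Cauchy, its limit g
  is orthogonal to ker W, and \<open>\<langle>W g, g\<rangle> = lim \<langle>W P f\<^sub>n, P f\<^sub>n\<rangle> = lim \<langle>W f\<^sub>n, f\<^sub>n\<rangle> = 0\<close>,
  so g also lies in ker W and g = 0. The projections exist because the space is complete:
  a minimising sequence for the distance to a closed subspace is Cauchy by the parallelogram
  law.\<close>

section \<open>Complex inner product spaces\<close>

lemma cinner_zero_left [simp]: "cinner 0 (y::'a::complex_inner) = 0"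
  using cinner_add_left[of "0::'a" 0 y] by simp

lemma cinner_minus_left [simp]: "cinner (- x) (y::'a::complex_inner) = - cinner x y"
  using cinner_add_left[of x "- x" y] by (simp add: eq_neg_iff_add_eq_0 add.commute)

lemma cinner_diff_left [simp]: "cinner (x - z) (y::'a::complex_inner) = cinner x y - cinner z y"
  using cinner_add_left[of x "- z" y] by simp

lemma cinner_add_right [simp]: "cinner (y::'a::complex_inner) (x + z) = cinner y x + cinner y z"
  by (metis cinner_commute cinner_add_left complex_cnj_add)

lemma cinner_zero_right [simp]: "cinner (y::'a::complex_inner) 0 = 0"
  by (metis cinner_commute cinner_zero_left complex_cnj_zero)

lemma cinner_diff_right [simp]: "cinner (y::'a::complex_inner) (x - z) = cinner y x - cinner y z"
  by (metis cinner_commute cinner_diff_left complex_cnj_diff)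

lemma cinner_minus_right [simp]: "cinner (y::'a::complex_inner) (- x) = - cinner y x"
  by (metis cinner_commute cinner_minus_left complex_cnj_minus)

lemma cinner_scaleC_right [simp]: "cinner (y::'a::complex_inner) (scaleC a x) = cnj a * cinner y x"
  by (metis cinner_commute cinner_scaleC_left complex_cnj_mult)

declare cinner_add_left [simp] cinner_scaleC_left [simp]

lemma scaleC_zero_right [simp]: "scaleC a (0::'a::complex_vector) = 0"
  using scaleC_add_right[of a "0::'a" 0] by simp

lemma scaleC_zero_left [simp]: "scaleC 0 (x::'a::complex_vector) = 0"
  using scaleC_add_left[of 0 0 x] by simp

lemma scaleC_minus_left: "scaleC (- a) (x::'a::complex_vector) = - scaleC a x"
  using scaleC_add_left[of a "- a" x] by (simp add: eq_neg_iff_add_eq_0 add.commute)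

lemma scaleC_minus_one: "scaleC (- 1) (x::'a::complex_vector) = - x"
  by (simp add: scaleC_minus_left scaleC_one)

lemma scaleC_diff_right: "scaleC a (x - y::'a::complex_vector) = scaleC a x - scaleC a y"
  by (metis add_diff_cancel diff_add_cancel scaleC_add_right)

lemma cinner_self_eq_Re: "cinner x (x::'a::complex_inner) = complex_of_real (Re (cinner x x))"
  using cinner_ge_zero[of x] by (simp add: complex_eq_iff)

lemma cnorm_nonneg: "cnorm (x::'a::complex_inner) \<ge> 0"
  using cinner_ge_zero[of x] by (simp add: cnorm_def)

lemma power2_cnorm_eq_cinner: "(cnorm x)\<^sup>2 = Re (cinner x (x::'a::complex_inner))"
  using cinner_ge_zero[of x] by (simp add: cnorm_def)

lemma cinner_self_eq_cnorm: "cinner x x = complex_of_real ((cnorm x)\<^sup>2)"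
  by (simp only: power2_cnorm_eq_cinner flip: cinner_self_eq_Re)

lemma cnorm_eq_zero [simp]: "cnorm x = 0 \<longleftrightarrow> x = (0::'a::complex_inner)"
proof -
  have "cnorm x = 0 \<longleftrightarrow> Re (cinner x x) = 0"
    by (simp add: cnorm_def)
  also have "\<dots> \<longleftrightarrow> cinner x x = 0"
    by (subst (2) cinner_self_eq_Re) simp
  finally show ?thesis
    by (simp add: cinner_eq_zero_iff)
qed

lemma cnorm_scaleC: "cnorm (scaleC a x) = cmod a * cnorm (x::'a::complex_inner)"
proof -
  have "cinner (scaleC a x) (scaleC a x) = (a * cnj a) * cinner x x"
    by simp
  also have "\<dots> = complex_of_real ((cmod a)\<^sup>2 * Re (cinner x x))"
    by (subst cinner_self_eq_Re) (simp add: complex_norm_square[symmetric])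
  finally have "Re (cinner (scaleC a x) (scaleC a x)) = (cmod a)\<^sup>2 * Re (cinner x x)"
    by simp
  then show ?thesis
    by (simp add: cnorm_def real_sqrt_mult)
qed

lemma cnorm_minus_commute: "cnorm (x - y) = cnorm (y - (x::'a::complex_inner))"
  using cnorm_scaleC[of "- 1" "x - y"] by (simp add: scaleC_minus_one)

lemma power2_cnorm_add:
  "(cnorm (x + y))\<^sup>2 = (cnorm x)\<^sup>2 + 2 * Re (cinner x y) + (cnorm (y::'a::complex_inner))\<^sup>2"
  using cinner_commute[of y x] by (simp add: power2_cnorm_eq_cinner)

lemma power2_cnorm_diff_component:
  fixes x y :: "'a::complex_inner"
  assumes "y \<noteq> 0"
  shows "(cnorm (x - scaleC (cinner x y / complex_of_real ((cnorm y)\<^sup>2)) y))\<^sup>2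
           = (cnorm x)\<^sup>2 - (cmod (cinner x y))\<^sup>2 / (cnorm y)\<^sup>2"
proof -
  define a c where "a = cinner x y" and "c = (cnorm y)\<^sup>2"
  have c: "c > 0"
    using assms cnorm_nonneg[of y] by (simp add: c_def)
  have yy: "cinner y y = complex_of_real c"
    by (simp add: c_def cinner_self_eq_cnorm)
  have yx: "cinner y x = cnj a"
    by (simp add: a_def cinner_commute[of y x])
  have eq: "cinner (x - scaleC (a / c) y) (x - scaleC (a / c) y)
          = cinner x x - complex_of_real ((cmod a)\<^sup>2 / c)"
    using c by (simp add: yy yx a_def[symmetric] field_simps)
      (simp add: complex_norm_square flip: of_real_power)
  have "(cnorm (x - scaleC (a / c) y))\<^sup>2 = (cnorm x)\<^sup>2 - (cmod a)\<^sup>2 / c"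
    by (simp only: power2_cnorm_eq_cinner eq minus_complex.sel Re_complex_of_real)
  then show ?thesis
    by (simp add: a_def c_def)
qed

lemma cauchy_schwarz: "cmod (cinner x y) \<le> cnorm x * cnorm (y::'a::complex_inner)"
proof (cases "y = 0")
  case False
  then have pos: "(cnorm y)\<^sup>2 > 0"
    using cnorm_nonneg[of y] by simp
  have "0 \<le> (cnorm (x - scaleC (cinner x y / complex_of_real ((cnorm y)\<^sup>2)) y))\<^sup>2"
    by simp
  also have "\<dots> = (cnorm x)\<^sup>2 - (cmod (cinner x y))\<^sup>2 / (cnorm y)\<^sup>2"
    by (rule power2_cnorm_diff_component[OF False])
  finally have "(cmod (cinner x y))\<^sup>2 / (cnorm y)\<^sup>2 \<le> (cnorm x)\<^sup>2"
    by simp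
  then have "(cmod (cinner x y))\<^sup>2 \<le> (cnorm x * cnorm y)\<^sup>2"
    using pos by (simp add: field_simps power_mult_distrib)
  then show ?thesis
    by (rule power2_le_imp_le) (simp add: cnorm_nonneg)
qed (simp add: cnorm_nonneg)

lemma cnorm_triangle: "cnorm (x + y) \<le> cnorm x + cnorm (y::'a::complex_inner)"
proof -
  have "Re (cinner x y) \<le> cnorm x * cnorm y"
    using cauchy_schwarz[of x y] complex_Re_le_cmod[of "cinner x y"] by linarith
  then have "(cnorm (x + y))\<^sup>2 \<le> (cnorm x + cnorm y)\<^sup>2"
    by (simp add: power2_cnorm_add power2_sum)
  then show ?thesis
    by (rule power2_le_imp_le) (simp add: cnorm_nonneg)
qed

lemma cnorm_triangle_diff: "cnorm (x - z) \<le> cnorm (x - y) + cnorm (y - (z::'a::complex_inner))"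
  using cnorm_triangle[of "x - y" "y - z"] by simp

lemma cnorm_parallelogram:
  "(cnorm (u + v))\<^sup>2 + (cnorm (u - v))\<^sup>2 = 2 * (cnorm u)\<^sup>2 + 2 * (cnorm (v::'a::complex_inner))\<^sup>2"
  using power2_cnorm_add[of u v] power2_cnorm_add[of u "- v"] cnorm_minus_commute[of 0 v] by simp

lemma cinner_eq_0_if_norm_minimal:
  fixes r z :: "'a::complex_inner"
  assumes "\<And>t. cnorm r \<le> cnorm (r - scaleC t z)"
  shows "cinner r z = 0"
proof (cases "z = 0")
  case False
  have "(cnorm r)\<^sup>2 \<le> (cnorm r)\<^sup>2 - (cmod (cinner r z))\<^sup>2 / (cnorm z)\<^sup>2"
    using power_mono[OF assms cnorm_nonneg] power2_cnorm_diff_component[OF False] by metis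
  then have "(cmod (cinner r z))\<^sup>2 \<le> 0"
    using False cnorm_nonneg[of z] by (simp add: field_simps)
  then show ?thesis
    by simp
qed simp

definition clinear :: "('a::complex_vector \<Rightarrow> 'b::complex_vector) \<Rightarrow> bool" where
  "clinear Q \<longleftrightarrow> (\<forall>x y. Q (x + y) = Q x + Q y) \<and> (\<forall>a x. Q (scaleC a x) = scaleC a (Q x))"

lemma clinear_add: "clinear Q \<Longrightarrow> Q (x + y) = Q x + Q y"
  by (simp add: clinear_def)

lemma clinear_scaleC: "clinear Q \<Longrightarrow> Q (scaleC a x) = scaleC a (Q x)"
  by (simp add: clinear_def)

lemma clinear_zero: "clinear Q \<Longrightarrow> Q 0 = 0"
  using clinear_add[of Q 0 0] by simp

lemma clinear_diff: "clinear Q \<Longrightarrow> Q (x - y) = Q x - Q y"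
  using clinear_add[of Q "x - y" y] by (simp add: eq_diff_eq)

lemma bounded_op_clinear: "bounded_op Q \<Longrightarrow> clinear Q"
  by (simp add: bounded_op_def clinear_def)

lemma bounded_opI: "clinear Q \<Longrightarrow> (\<And>x. cnorm (Q x) \<le> K * cnorm x) \<Longrightarrow> bounded_op Q"
  unfolding bounded_op_def clinear_def by blast

lemma bounded_op_bound:
  assumes "bounded_op Q"
  shows "\<exists>K\<ge>0. \<forall>x. cnorm (Q x) \<le> K * cnorm x"
proof -
  obtain K where K: "\<And>x. cnorm (Q x) \<le> K * cnorm x"
    using assms unfolding bounded_op_def by blast
  have "cnorm (Q x) \<le> \<bar>K\<bar> * cnorm x" for x
    using K[of x] mult_right_mono[OF abs_ge_self cnorm_nonneg, of K x] by linarith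
  then show ?thesis
    by (intro exI[of _ "\<bar>K\<bar>"]) simp
qed

lemma bounded_op_comp:
  assumes "bounded_op T" "bounded_op R"
  shows "bounded_op (\<lambda>x. T (R x))"
proof -
  obtain K where K: "K \<ge> 0" "\<And>x. cnorm (T x) \<le> K * cnorm x"
    using bounded_op_bound[OF assms(1)] by blast
  obtain L where L: "\<And>x. cnorm (R x) \<le> L * cnorm x"
    using bounded_op_bound[OF assms(2)] by blast
  have "cnorm (T (R x)) \<le> (K * L) * cnorm x" for x
  proof -
    have "cnorm (T (R x)) \<le> K * cnorm (R x)"
      by (rule K(2))
    also have "\<dots> \<le> K * (L * cnorm x)"
      by (rule mult_left_mono[OF L K(1)])
    finally show ?thesis
      by (simp add: mult.assoc)
  qed
  moreover have "clinear (\<lambda>x. T (R x))"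
    using bounded_op_clinear[OF assms(1)] bounded_op_clinear[OF assms(2)]
    unfolding clinear_def by simp
  ultimately show ?thesis
    by (rule bounded_opI[rotated])
qed

lemma qform_nonneg: "nonneg_op S \<Longrightarrow> 0 \<le> qform S f"
  by (simp add: nonneg_op_def qform_def)

lemma qform_le_of_nonneg_op_diff: "nonneg_op (\<lambda>x. S x - Q x) \<Longrightarrow> qform Q f \<le> qform S f"
  using qform_nonneg[of "\<lambda>x. S x - Q x" f] by (simp add: qform_def)

lemma nonneg_op_cinner_commute:
  assumes "clinear Q" "nonneg_op Q"
  shows "cinner (Q x) y = cnj (cinner (Q y) (x::'a::complex_inner))"
proof -
  have real: "Im (cinner (Q z) z) = 0" for z
    using assms(2) by (simp add: nonneg_op_def)
  have "Im (cinner (Q x) y) + Im (cinner (Q y) x) = 0"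
    using real[of "x + y"] real[of x] real[of y] assms(1) by (simp add: clinear_add)
  moreover have "Re (cinner (Q y) x) - Re (cinner (Q x) y) = 0"
    using real[of "x + scaleC \<i> y"] real[of x] real[of y] assms(1)
    by (simp add: clinear_add clinear_scaleC)
  ultimately show ?thesis
    by (simp add: complex_eq_iff)
qed

text \<open>With \<open>y = Q x\<close>, non-negativity along \<open>x - s y\<close> gives
  \<open>2 s \<parallel>y\<parallel>\<^sup>2 \<le> s\<^sup>2 \<langle>Q y, y\<rangle>\<close> for all real s.\<close>
lemma nonneg_op_apply_eq_0:
  fixes x :: "'a::complex_inner"
  assumes Q: "clinear Q" "nonneg_op Q" and qx: "qform Q x \<le> 0"
  shows "Q x = 0"
proof -
  define y c r where "y = Q x" and "c = (cnorm y)\<^sup>2" and "r = qform Q y"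
  have xy: "Re (cinner (Q x) y) = c" and yx: "Re (cinner (Q y) x) = c"
    using nonneg_op_cinner_commute[OF Q, of y x] by (simp_all add: y_def c_def power2_cnorm_eq_cinner)
  have qx0: "qform Q x = 0"
    using qx qform_nonneg[OF Q(2)] by (simp add: order_antisym)
  have key: "2 * s * c \<le> s\<^sup>2 * r" for s :: real
  proof -
    have "0 \<le> qform Q (x - scaleC (complex_of_real s) y)"
      by (rule qform_nonneg[OF Q(2)])
    also have "\<dots> = qform Q x - s * Re (cinner (Q x) y) - s * Re (cinner (Q y) x) + s\<^sup>2 * r"
      using Q(1) by (simp add: qform_def r_def clinear_diff clinear_scaleC power2_eq_square algebra_simps)
    finally show ?thesis
      by (simp add: qx0 xy yx algebra_simps)
  qed
  have "c \<le> 0"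
  proof (cases "r \<le> 0")
    case True
    then show ?thesis
      using key[of 1] by simp
  next
    case False
    then have "2 * c * c \<le> c * c"
      using key[of "c / r"] by (simp add: power2_eq_square field_simps)
    then have "c * c = 0"
      using zero_le_square[of c] by linarith
    then show ?thesis
      by simp
  qed
  then show ?thesis
    using cnorm_nonneg[of y] by (simp add: c_def y_def)
qed

lemma qform_add_kernel:
  assumes "clinear W" "nonneg_op W" "W k = 0"
  shows "qform W (x + k) = qform W x"
proof -
  have "cinner (W x) k = 0"
    using nonneg_op_cinner_commute[OF assms(1,2), of x k] assms(3) by simp
  then show ?thesis
    using assms by (simp add: qform_def clinear_add)
qed

lemma chilbert_cauchy_tendsto:
  fixes X :: "nat \<Rightarrow> 'a::chilbert_space"
  assumes "\<forall>e>0. \<exists>N. \<forall>m\<ge>N. \<forall>n\<ge>N. cnorm (X m - X n) < e"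
  obtains L where "(\<lambda>n. cnorm (X n - L)) \<longlonglongrightarrow> 0"
proof -
  obtain L where "\<forall>e>0. \<exists>N. \<forall>n\<ge>N. cnorm (X n - L) < e"
    using cauchy_convergent[OF assms] by blast
  then have "(\<lambda>n. cnorm (X n - L)) \<longlonglongrightarrow> 0"
    by (simp add: LIMSEQ_iff cnorm_nonneg)
  then show thesis
    by (rule that)
qed

lemma cauchy_if_diff_le_null:
  fixes X :: "nat \<Rightarrow> 'a::complex_inner"
  assumes "\<And>N m n. N \<le> m \<Longrightarrow> N \<le> n \<Longrightarrow> cnorm (X m - X n) \<le> b N" and "b \<longlonglongrightarrow> 0"
  shows "\<forall>e>0. \<exists>N. \<forall>m\<ge>N. \<forall>n\<ge>N. cnorm (X m - X n) < e"
proof (intro allI impI)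
  fix e :: real
  assume "e > 0"
  then obtain N where "b N < e"
    using order_tendstoD(2)[OF assms(2)] by (auto simp: eventually_sequentially)
  then have "\<forall>m\<ge>N. \<forall>n\<ge>N. cnorm (X m - X n) < e"
    using assms(1)[of N] by (auto intro: le_less_trans)
  then show "\<exists>N. \<forall>m\<ge>N. \<forall>n\<ge>N. cnorm (X m - X n) < e"
    by blast
qed

lemma cinner_tendsto_left:
  assumes "(\<lambda>n. cnorm (X n - L)) \<longlonglongrightarrow> 0"
  shows "(\<lambda>n. cinner (X n) z) \<longlonglongrightarrow> cinner L (z::'a::complex_inner)"
proof (rule LIM_zero_cancel, rule Lim_null_comparison)
  show "\<forall>\<^sub>F n in sequentially. cmod (cinner (X n) z - cinner L z) \<le> cnorm (X n - L) * cnorm z"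
    using cauchy_schwarz[of "X _ - L" z] by simp
  show "(\<lambda>n. cnorm (X n - L) * cnorm z) \<longlonglongrightarrow> 0"
    using tendsto_mult_left_zero[OF assms] by simp
qed

lemma bounded_op_tendsto:
  assumes "bounded_op W" "(\<lambda>n. cnorm (X n - L)) \<longlonglongrightarrow> 0"
  shows "(\<lambda>n. cnorm (W (X n) - W L)) \<longlonglongrightarrow> 0"
proof -
  obtain K where K: "K \<ge> 0" "\<And>x. cnorm (W x) \<le> K * cnorm x"
    using bounded_op_bound[OF assms(1)] by blast
  have "cnorm (W (X n) - W L) \<le> K * cnorm (X n - L)" for n
    using K(2)[of "X n - L"] clinear_diff[OF bounded_op_clinear[OF assms(1)]] by simp
  then have "\<forall>\<^sub>F n in sequentially. norm (cnorm (W (X n) - W L)) \<le> K * cnorm (X n - L)"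
    by (simp add: cnorm_nonneg)
  moreover have "(\<lambda>n. K * cnorm (X n - L)) \<longlonglongrightarrow> 0"
    using tendsto_mult_right_zero[OF assms(2)] by simp
  ultimately show ?thesis
    by (rule Lim_null_comparison)
qed

lemma qform_tendsto:
  assumes W: "bounded_op W" and X: "(\<lambda>n. cnorm (X n - L)) \<longlonglongrightarrow> 0"
  shows "(\<lambda>n. qform W (X n)) \<longlonglongrightarrow> qform W L"
proof (rule LIM_zero_cancel, rule Lim_null_comparison)
  define a b where "a n = cnorm (W (X n) - W L)" and "b n = cnorm (X n - L)" for n
  have "\<bar>qform W (X n) - qform W L\<bar> \<le> a n * (b n + cnorm L) + cnorm (W L) * b n" for n
  proof -
    have "qform W (X n) - qform W L = Re (cinner (W (X n) - W L) (X n) + cinner (W L) (X n - L))"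
      by (simp add: qform_def)
    also have "\<bar>\<dots>\<bar> \<le> a n * cnorm (X n) + cnorm (W L) * b n"
      unfolding a_def b_def
      by (rule order_trans[OF abs_Re_le_cmod order_trans[OF norm_triangle_ineq
            add_mono[OF cauchy_schwarz cauchy_schwarz]]])
    also have "cnorm (X n) \<le> b n + cnorm L"
      using cnorm_triangle[of "X n - L" L] by (simp add: b_def)
    then have "a n * cnorm (X n) \<le> a n * (b n + cnorm L)"
      by (simp add: a_def cnorm_nonneg mult_left_mono)
    finally show ?thesis
      by simp
  qed
  then show "\<forall>\<^sub>F n in sequentially. norm (qform W (X n) - qform W L)
               \<le> a n * (b n + cnorm L) + cnorm (W L) * b n"
    by simp
  have "a \<longlonglongrightarrow> 0" "b \<longlonglongrightarrow> 0"
    using bounded_op_tendsto[OF W X] X by (simp_all add: a_def[abs_def] b_def[abs_def])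
  then show "(\<lambda>n. a n * (b n + cnorm L) + cnorm (W L) * b n) \<longlonglongrightarrow> 0"
    by (auto intro!: tendsto_eq_intros)
qed

section \<open>Orthogonal projections onto closed subspaces\<close>

definition csubspace :: "'a::complex_vector set \<Rightarrow> bool" where
  "csubspace K \<longleftrightarrow> 0 \<in> K \<and> (\<forall>x\<in>K. \<forall>y\<in>K. x + y \<in> K) \<and> (\<forall>a. \<forall>x\<in>K. scaleC a x \<in> K)"

definition cclosed :: "'a::complex_inner set \<Rightarrow> bool" where
  "cclosed K \<longleftrightarrow> (\<forall>X L. (\<forall>n. X n \<in> K) \<and> (\<lambda>n. cnorm (X n - L)) \<longlonglongrightarrow> 0 \<longrightarrow> L \<in> K)"

definition orthogonal_complement :: "'a::complex_inner set \<Rightarrow> 'a set" where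
  "orthogonal_complement K = {x. \<forall>k\<in>K. cinner x k = 0}"

lemma csubspace_add: "csubspace K \<Longrightarrow> x \<in> K \<Longrightarrow> y \<in> K \<Longrightarrow> x + y \<in> K"
  by (simp add: csubspace_def)

lemma csubspace_scaleC: "csubspace K \<Longrightarrow> x \<in> K \<Longrightarrow> scaleC a x \<in> K"
  by (simp add: csubspace_def)

lemma csubspace_diff:
  assumes "csubspace K" "x \<in> K" "y \<in> K"
  shows "x - y \<in> K"
proof -
  have "scaleC (- 1) y \<in> K"
    using assms by (simp add: csubspace_def)
  then have "x + - y \<in> K"
    using assms unfolding csubspace_def scaleC_minus_one by blast
  then show ?thesis
    by simp
qed

lemma cclosedD: "cclosed K \<Longrightarrow> (\<And>n. X n \<in> K) \<Longrightarrow> (\<lambda>n. cnorm (X n - L)) \<longlonglongrightarrow> 0 \<Longrightarrow> L \<in> K"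
  unfolding cclosed_def by blast

lemma kernel_closed_csubspace:
  assumes "bounded_op W"
  shows "csubspace {x. W x = 0}" "cclosed {x. W x = 0}"
proof -
  show "csubspace {x. W x = 0}"
    using bounded_op_clinear[OF assms] by (simp add: csubspace_def clinear_zero clinear_add clinear_scaleC)
  show "cclosed {x. W x = 0}"
    unfolding cclosed_def
  proof (intro allI impI)
    fix X L
    assume "(\<forall>n. X n \<in> {x. W x = 0}) \<and> (\<lambda>n. cnorm (X n - L)) \<longlonglongrightarrow> 0"
    then have "(\<lambda>n. cnorm (0 - W L)) \<longlonglongrightarrow> 0"
      using bounded_op_tendsto[OF assms, of X L] by simp
    then show "L \<in> {x. W x = 0}"
      by (simp add: LIMSEQ_const_iff)
  qed
qed

lemma csubspace_orthogonal_complement: "csubspace (orthogonal_complement K)"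
  by (auto simp: csubspace_def orthogonal_complement_def)

lemma cclosed_orthogonal_complement: "cclosed (orthogonal_complement K)"
  unfolding cclosed_def orthogonal_complement_def
proof (intro allI impI CollectI ballI)
  fix X L k
  assume "(\<forall>n. X n \<in> {x. \<forall>k\<in>K. cinner x k = 0}) \<and> (\<lambda>n. cnorm (X n - L)) \<longlonglongrightarrow> 0" "k \<in> K"
  then have "(\<lambda>n. cinner (X n) k) \<longlonglongrightarrow> cinner L k" "\<And>n. cinner (X n) k = 0"
    using cinner_tendsto_left[of X L k] by auto
  then show "cinner L k = 0"
    by (simp add: LIMSEQ_const_iff)
qed

lemma orthogonal_complement_self: "x \<in> K \<Longrightarrow> x \<in> orthogonal_complement K \<Longrightarrow> x = 0"
  using cinner_eq_zero_iff[of x] by (simp add: orthogonal_complement_def)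

lemma orthogonal_complement_commute:
  "x \<in> orthogonal_complement K \<Longrightarrow> k \<in> K \<Longrightarrow> cinner k x = 0"
  using cinner_commute[of k x] by (simp add: orthogonal_complement_def)

text \<open>The parallelogram law for \<open>f - k\<close> and \<open>f - l\<close>.\<close>
lemma cnorm_diff_near_minimizers:
  fixes f k l :: "'a::complex_inner"
  assumes mid: "d \<le> cnorm (f - scaleC (1/2) (k + l))" and "0 \<le> d"
    and k: "cnorm (f - k) \<le> d + \<delta>" and l: "cnorm (f - l) \<le> d + \<delta>"
  shows "(cnorm (k - l))\<^sup>2 \<le> 4 * \<delta> * (2 * d + \<delta>)"
proof -
  have two: "scaleC 2 x = x + x" for x :: 'a
    using scaleC_add_left[of 1 1 x] by (simp add: scaleC_one)
  have "(f - k) + (f - l) = scaleC 2 (f - scaleC (1/2) (k + l))"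
    by (simp add: two scaleC_diff_right scaleC_scaleC scaleC_one)
  then have "2 * d \<le> cnorm ((f - k) + (f - l))"
    using mid by (simp add: cnorm_scaleC)
  then have "4 * d\<^sup>2 \<le> (cnorm ((f - k) + (f - l)))\<^sup>2"
    using power_mono[of "2 * d" _ 2] \<open>0 \<le> d\<close> by (simp add: power_mult_distrib)
  moreover have "(cnorm (f - k))\<^sup>2 \<le> (d + \<delta>)\<^sup>2" "(cnorm (f - l))\<^sup>2 \<le> (d + \<delta>)\<^sup>2"
    using power_mono[OF k cnorm_nonneg] power_mono[OF l cnorm_nonneg] by auto
  moreover have "(f - k) - (f - l) = l - k"
    by simp
  then have "(cnorm ((f - k) + (f - l)))\<^sup>2 + (cnorm (k - l))\<^sup>2
               = 2 * (cnorm (f - k))\<^sup>2 + 2 * (cnorm (f - l))\<^sup>2"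
    using cnorm_parallelogram[of "f - k" "f - l"] by (simp add: cnorm_minus_commute[of l k])
  ultimately have "(cnorm (k - l))\<^sup>2 \<le> 4 * (d + \<delta>)\<^sup>2 - 4 * d\<^sup>2"
    by linarith
  then show ?thesis
    by (simp add: power2_eq_square algebra_simps)
qed

lemma minimizing_sequence_cauchy:
  fixes f :: "'a::complex_inner"
  assumes K: "csubspace K" and k: "\<And>n. k n \<in> K"
    and d_le: "\<And>x. x \<in> K \<Longrightarrow> d \<le> cnorm (f - x)" and "0 \<le> d"
    and k_near: "\<And>n. cnorm (f - k n) \<le> d + inverse (real (Suc n))"
  shows "\<forall>e>0. \<exists>N. \<forall>m\<ge>N. \<forall>n\<ge>N. cnorm (k m - k n) < e"
proof (rule cauchy_if_diff_le_null)
  define \<delta> :: "nat \<Rightarrow> real" where "\<delta> n = inverse (real (Suc n))" for n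
  show "cnorm (k m - k n) \<le> sqrt (4 * \<delta> N * (2 * d + \<delta> N))" if "N \<le> m" "N \<le> n" for N m n
  proof (rule real_le_rsqrt, rule cnorm_diff_near_minimizers[OF _ \<open>0 \<le> d\<close>])
    show "d \<le> cnorm (f - scaleC (1/2) (k m + k n))"
      using K k by (intro d_le) (simp add: csubspace_def)
    have "inverse (real (Suc m)) \<le> \<delta> N" "inverse (real (Suc n)) \<le> \<delta> N"
      using that by (simp_all add: \<delta>_def le_imp_inverse_le)
    then show "cnorm (f - k m) \<le> d + \<delta> N" "cnorm (f - k n) \<le> d + \<delta> N"
      using k_near[of m] k_near[of n] by linarith+
  qed
  have "(\<lambda>N. sqrt (4 * \<delta> N * (2 * d + \<delta> N))) \<longlonglongrightarrow> sqrt (4 * 0 * (2 * d + 0))"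
    unfolding \<delta>_def by (intro tendsto_intros LIMSEQ_inverse_real_of_nat)
  then show "(\<lambda>N. sqrt (4 * \<delta> N * (2 * d + \<delta> N))) \<longlonglongrightarrow> 0"
    by simp
qed

lemma best_approximation_exists:
  fixes f :: "'a::chilbert_space"
  assumes K: "csubspace K" "cclosed K"
  shows "\<exists>e\<in>K. \<forall>k\<in>K. cnorm (f - e) \<le> cnorm (f - k)"
proof -
  define d where "d = (INF k\<in>K. cnorm (f - k))"
  have ne: "K \<noteq> {}"
    using K(1) by (auto simp: csubspace_def)
  have bdd: "bdd_below ((\<lambda>k. cnorm (f - k)) ` K)"
    by (rule bdd_belowI2[where m = 0]) (rule cnorm_nonneg)
  have d_le: "d \<le> cnorm (f - k)" if "k \<in> K" for k
    unfolding d_def using bdd that by (rule cINF_lower)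
  have d_nonneg: "0 \<le> d"
    unfolding d_def using ne by (rule cINF_greatest) (rule cnorm_nonneg)
  have "\<exists>k\<in>K. cnorm (f - k) < d + inverse (real (Suc n))" for n
    using cINF_less_iff[OF ne bdd, of "d + inverse (real (Suc n))"] by (simp add: d_def[symmetric])
  then obtain k where k: "\<And>n. k n \<in> K" "\<And>n. cnorm (f - k n) < d + inverse (real (Suc n))"
    using bchoice[of UNIV "\<lambda>n k. k \<in> K \<and> cnorm (f - k) < d + inverse (real (Suc n))"] by blast
  obtain e where e: "(\<lambda>n. cnorm (k n - e)) \<longlonglongrightarrow> 0"
    using minimizing_sequence_cauchy[OF K(1) k(1) d_le d_nonneg less_imp_le[OF k(2)]]
    by (rule chilbert_cauchy_tendsto)
  have "cnorm (f - e) \<le> d"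
  proof (rule LIMSEQ_le_const)
    show "(\<lambda>n. d + inverse (real (Suc n)) + cnorm (k n - e)) \<longlonglongrightarrow> d"
      using tendsto_add[OF tendsto_add[OF tendsto_const LIMSEQ_inverse_real_of_nat] e] by simp
    have "cnorm (f - e) \<le> d + inverse (real (Suc n)) + cnorm (k n - e)" for n
      using k(2)[of n] cnorm_triangle_diff[of f e "k n"] by linarith
    then show "\<exists>N. \<forall>n\<ge>N. cnorm (f - e) \<le> d + inverse (real (Suc n)) + cnorm (k n - e)"
      by blast
  qed
  then show ?thesis
    using cclosedD[OF K(2) k(1) e] d_le by force
qed

lemma orthogonal_projection_exists:
  fixes f :: "'a::chilbert_space"
  assumes K: "csubspace K" "cclosed K"
  shows "\<exists>e. e \<in> K \<and> f - e \<in> orthogonal_complement K"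
proof -
  obtain e where e: "e \<in> K" "\<And>k. k \<in> K \<Longrightarrow> cnorm (f - e) \<le> cnorm (f - k)"
    using best_approximation_exists[OF K] by blast
  have "cinner (f - e) z = 0" if "z \<in> K" for z
  proof (rule cinner_eq_0_if_norm_minimal)
    fix t
    have "e + scaleC t z \<in> K"
      using K(1) e(1) that by (simp add: csubspace_def)
    then show "cnorm (f - e) \<le> cnorm (f - e - scaleC t z)"
      using e(2) by (simp add: diff_diff_eq)
  qed
  then show ?thesis
    using e(1) by (auto simp: orthogonal_complement_def)
qed

text \<open>Meaningful only for closed subspaces K, where the defining property has a unique
  solution; otherwise the value is an arbitrary choice.\<close>
definition cproj :: "'a::chilbert_space set \<Rightarrow> 'a \<Rightarrow> 'a" where
  "cproj K f = (SOME e. e \<in> K \<and> f - e \<in> orthogonal_complement K)"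

context
  fixes K :: "'a::chilbert_space set"
  assumes K: "csubspace K" "cclosed K"
begin

lemma cproj_in: "cproj K f \<in> K"
  and cproj_orthogonal: "f - cproj K f \<in> orthogonal_complement K"
  using someI_ex[OF orthogonal_projection_exists[OF K, of f]] by (simp_all add: cproj_def)

lemma cproj_eqI:
  assumes e: "e \<in> K" "f - e \<in> orthogonal_complement K"
  shows "cproj K f = e"
proof -
  have "cproj K f - e \<in> K"
    using csubspace_diff[OF K(1) cproj_in e(1)] .
  moreover have "(f - e) - (f - cproj K f) \<in> orthogonal_complement K"
    using csubspace_diff[OF csubspace_orthogonal_complement e(2) cproj_orthogonal[of f]] .
  then have "cproj K f - e \<in> orthogonal_complement K"
    by simp
  ultimately show ?thesis
    using orthogonal_complement_self by fastforce
qed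

lemma cproj_eq_0: "x \<in> orthogonal_complement K \<Longrightarrow> cproj K x = 0"
  using K(1) by (intro cproj_eqI) (simp_all add: csubspace_def)

lemma clinear_cproj: "clinear (cproj K)"
proof -
  have "cproj K (x + y) = cproj K x + cproj K y" for x y
  proof (rule cproj_eqI)
    show "cproj K x + cproj K y \<in> K"
      using csubspace_add[OF K(1) cproj_in cproj_in] .
    have eq: "x + y - (cproj K x + cproj K y) = (x - cproj K x) + (y - cproj K y)"
      by simp
    show "x + y - (cproj K x + cproj K y) \<in> orthogonal_complement K"
      unfolding eq
      by (rule csubspace_add[OF csubspace_orthogonal_complement cproj_orthogonal cproj_orthogonal])
  qed
  moreover have "cproj K (scaleC a x) = scaleC a (cproj K x)" for a x
  proof (rule cproj_eqI)
    show "scaleC a (cproj K x) \<in> K"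
      using csubspace_scaleC[OF K(1) cproj_in] .
    show "scaleC a x - scaleC a (cproj K x) \<in> orthogonal_complement K"
      using csubspace_scaleC[OF csubspace_orthogonal_complement cproj_orthogonal[of x]]
      by (simp add: scaleC_diff_right)
  qed
  ultimately show ?thesis
    by (simp add: clinear_def)
qed

lemma cinner_cproj_self: "cinner (cproj K f) f = cinner (cproj K f) (cproj K f)"
proof -
  have "cinner (cproj K f) (f - cproj K f) = 0"
    using orthogonal_complement_commute[OF cproj_orthogonal cproj_in] .
  then show ?thesis
    by simp
qed

lemma cnorm_cproj_le: "cnorm (cproj K f) \<le> cnorm f"
proof -
  have "(cnorm f)\<^sup>2 = (cnorm (cproj K f + (f - cproj K f)))\<^sup>2"
    by simp
  also have "\<dots> = (cnorm (cproj K f))\<^sup>2 + (cnorm (f - cproj K f))\<^sup>2"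
    using power2_cnorm_add[of "cproj K f" "f - cproj K f"]
      orthogonal_complement_commute[OF cproj_orthogonal cproj_in] by simp
  finally have "(cnorm (cproj K f))\<^sup>2 \<le> (cnorm f)\<^sup>2"
    by simp
  then show ?thesis
    by (rule power2_le_imp_le) (rule cnorm_nonneg)
qed

lemma bounded_op_cproj: "bounded_op (cproj K)"
  using cnorm_cproj_le by (intro bounded_opI[OF clinear_cproj, of 1]) simp

lemma qform_cproj: "qform (cproj K) f = (cnorm (cproj K f))\<^sup>2"
  by (simp add: qform_def cinner_cproj_self power2_cnorm_eq_cinner)

lemma nonneg_op_cproj: "nonneg_op (cproj K)"
  unfolding nonneg_op_def cinner_cproj_self using cinner_ge_zero by blast

end

lemma cproj_orthogonal_complement:
  assumes K: "csubspace K" "cclosed K"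
  shows "cproj (orthogonal_complement K) f = f - cproj K f"
proof (rule cproj_eqI[OF csubspace_orthogonal_complement cclosed_orthogonal_complement])
  show "f - cproj K f \<in> orthogonal_complement K"
    by (rule cproj_orthogonal[OF K])
  show "f - (f - cproj K f) \<in> orthogonal_complement (orthogonal_complement K)"
    using orthogonal_complement_commute[OF _ cproj_in[OF K]] by (simp add: orthogonal_complement_def)
qed

section \<open>The regular and the singular part\<close>

lemma mem_M_l_comp:
  assumes T: "bounded_op T" and R: "bounded_op R" "nonneg_op R"
    and qform_R: "\<And>f. qform R f = (cnorm (R f))\<^sup>2"
  shows "R \<in> M_l (\<lambda>x. T (R x))"
proof -
  obtain K where K: "K \<ge> 0" "\<And>x. cnorm (T x) \<le> K * cnorm x"
    using bounded_op_bound[OF T] by blast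
  define S2 where "S2 g = scaleC (complex_of_real (K\<^sup>2)) g" for g :: 'a
  have "clinear S2"
    by (simp add: clinear_def S2_def scaleC_add_right scaleC_scaleC mult.commute)
  then have S2_bounded: "bounded_op S2"
    by (rule bounded_opI[of _ "K\<^sup>2"]) (simp add: S2_def cnorm_scaleC norm_power)
  have S2_cinner: "cinner (S2 g) g = complex_of_real (K\<^sup>2 * (cnorm g)\<^sup>2)" for g
    by (simp add: S2_def cinner_self_eq_cnorm)
  then have S2_nonneg: "nonneg_op S2" and qform_S2: "qform S2 g = K\<^sup>2 * (cnorm g)\<^sup>2" for g
    by (simp_all add: nonneg_op_def qform_def)
  have "cmod (cinner (T (R f)) g) \<le> sqrt (qform R f) * sqrt (qform S2 g)" for f g
  proof -
    have "cmod (cinner (T (R f)) g) \<le> cnorm (T (R f)) * cnorm g"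
      by (rule cauchy_schwarz)
    also have "\<dots> \<le> (K * cnorm (R f)) * cnorm g"
      by (rule mult_right_mono[OF K(2) cnorm_nonneg])
    also have "\<dots> = sqrt (qform R f) * sqrt (qform S2 g)"
      using K(1) by (simp add: qform_R qform_S2 real_sqrt_mult cnorm_nonneg)
    finally show ?thesis .
  qed
  then show ?thesis
    unfolding M_l_def using R S2_bounded S2_nonneg by blast
qed

lemma singular_op_cproj_kernel:
  assumes W: "bounded_op W"
  shows "singular_op W (cproj {x. W x = 0})"
  unfolding singular_op_def
proof (intro allI impI)
  define K where "K = {x. W x = 0}"
  note K = kernel_closed_csubspace[OF W, folded K_def]
  fix Q
  assume "bounded_op Q \<and> nonneg_op Q \<and> nonneg_op (\<lambda>x. cproj {x. W x = 0} x - Q x)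
            \<and> nonneg_op (\<lambda>x. W x - Q x)"
  then have Q: "clinear Q" "nonneg_op Q" and "nonneg_op (\<lambda>x. cproj K x - Q x)"
    and "nonneg_op (\<lambda>x. W x - Q x)"
    by (auto simp: K_def bounded_op_clinear)
  then have le_cproj: "qform Q x \<le> qform (cproj K) x" and le_W: "qform Q x \<le> qform W x" for x
    by (simp_all add: qform_le_of_nonneg_op_diff)
  have "Q (cproj K f) = 0" for f
  proof (rule nonneg_op_apply_eq_0[OF Q])
    show "qform Q (cproj K f) \<le> 0"
      using le_W[of "cproj K f"] cproj_in[OF K, of f] by (simp add: K_def qform_def)
  qed
  moreover have "Q (f - cproj K f) = 0" for f
  proof (rule nonneg_op_apply_eq_0[OF Q])
    show "qform Q (f - cproj K f) \<le> 0"
      using le_cproj[of "f - cproj K f"] cproj_eq_0[OF K cproj_orthogonal[OF K]]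
      by (simp add: qform_def)
  qed
  ultimately show "Q = (\<lambda>x. 0)"
    using clinear_diff[OF Q(1)] by fastforce
qed

lemma cauchy_if_qform_cauchy:
  assumes R: "clinear R" and qform_R: "\<And>f. qform R f = (cnorm (R f))\<^sup>2"
    and h: "\<forall>e>0. \<exists>N. \<forall>n\<ge>N. \<forall>m\<ge>N. qform R (h n - h m) < e"
  shows "\<forall>e>0. \<exists>N. \<forall>m\<ge>N. \<forall>n\<ge>N. cnorm (R (h m) - R (h n)) < e"
proof (intro allI impI)
  fix e :: real
  assume "e > 0"
  then obtain N where N: "\<forall>n\<ge>N. \<forall>m\<ge>N. (cnorm (R (h n) - R (h m)))\<^sup>2 < e\<^sup>2"
    using h[rule_format, of "e\<^sup>2"] by (auto simp: qform_R clinear_diff[OF R])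
  have "cnorm (R (h m) - R (h n)) < e" if "m \<ge> N" "n \<ge> N" for m n
    using power_less_imp_less_base[of _ 2 e] N that \<open>e > 0\<close> by simp
  then show "\<exists>N. \<forall>m\<ge>N. \<forall>n\<ge>N. cnorm (R (h m) - R (h n)) < e"
    by blast
qed

lemma limit_eq_0_if_qform_tendsto_0:
  assumes W: "bounded_op W" "nonneg_op W"
    and X: "\<And>n. X n \<in> orthogonal_complement {x. W x = 0}"
    and g: "(\<lambda>n. cnorm (X n - g)) \<longlonglongrightarrow> 0" and qform_X: "(\<lambda>n. qform W (X n)) \<longlonglongrightarrow> 0"
  shows "g = 0"
proof (rule orthogonal_complement_self)
  have "qform W g = 0"
    using qform_tendsto[OF W(1) g] qform_X LIMSEQ_unique by blast
  then show "g \<in> {x. W x = 0}"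
    using nonneg_op_apply_eq_0[OF bounded_op_clinear[OF W(1)] W(2)] by simp
  show "g \<in> orthogonal_complement {x. W x = 0}"
    using cclosedD[OF cclosed_orthogonal_complement X g] .
qed

lemma abs_continuous_cproj_orthogonal_kernel:
  assumes W: "bounded_op W" "nonneg_op W"
  shows "abs_continuous W (cproj (orthogonal_complement {x. W x = 0}))"
  unfolding abs_continuous_def
proof (intro allI impI)
  define K where "K = {x. W x = 0}"
  define P where "P = cproj (orthogonal_complement K)"
  note K = kernel_closed_csubspace[OF W(1), folded K_def]
  note K_perp = csubspace_orthogonal_complement[of K] cclosed_orthogonal_complement[of K]
  have qform_P: "qform P f = (cnorm (P f))\<^sup>2" for f
    unfolding P_def by (rule qform_cproj[OF K_perp])
  fix h :: "nat \<Rightarrow> 'a"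
  assume hW: "(\<lambda>n. qform W (h n)) \<longlonglongrightarrow> 0"
    and hP: "\<forall>e>0. \<exists>N. \<forall>n\<ge>N. \<forall>m\<ge>N.
               qform (cproj (orthogonal_complement {x. W x = 0})) (h n - h m) < e"
  have "\<forall>e>0. \<exists>N. \<forall>m\<ge>N. \<forall>n\<ge>N. cnorm (P (h m) - P (h n)) < e"
    using cauchy_if_qform_cauchy[OF clinear_cproj[OF K_perp] qform_cproj[OF K_perp]] hP
    by (simp add: K_def P_def)
  then obtain g where g: "(\<lambda>n. cnorm (P (h n) - g)) \<longlonglongrightarrow> 0"
    by (rule chilbert_cauchy_tendsto)
  have "qform W (P (h n)) = qform W (h n)" for n
  proof -
    have "h n = P (h n) + cproj K (h n)"
      using cproj_orthogonal_complement[OF K] by (simp add: P_def)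
    then have "qform W (h n) = qform W (P (h n) + cproj K (h n))"
      by (rule arg_cong)
    also have "\<dots> = qform W (P (h n))"
      using cproj_in[OF K]
      by (intro qform_add_kernel[OF bounded_op_clinear[OF W(1)] W(2)]) (simp add: K_def)
    finally show ?thesis
      by simp
  qed
  then have "g = 0"
    using limit_eq_0_if_qform_tendsto_0[OF W _ g] cproj_in[OF K_perp] hW by (simp add: K_def P_def)
  then have "(\<lambda>n. (cnorm (P (h n)))\<^sup>2) \<longlonglongrightarrow> 0"
    using tendsto_power[OF g, of 2] by simp
  then show "(\<lambda>n. qform (cproj (orthogonal_complement {x. W x = 0})) (h n)) \<longlonglongrightarrow> 0"
    by (simp add: K_def[symmetric] P_def[symmetric] qform_P)
qed

theorem mainTheorem4:
  fixes T W :: "'a::chilbert_space \<Rightarrow> 'a"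
  assumes "bounded_op T" and "bounded_op W" and "nonneg_op W"
  shows "\<exists>Tlr Tls. bounded_op Tlr \<and> bounded_op Tls \<and>
           T = (\<lambda>x. Tlr x + Tls x) \<and>
           left_regular W Tlr \<and> left_strongly_singular W Tls"
proof -
  define K where "K = {x. W x = 0}"
  note K = kernel_closed_csubspace[OF assms(2), folded K_def]
  note K_perp = csubspace_orthogonal_complement[of K] cclosed_orthogonal_complement[of K]
  define P E where "P = cproj (orthogonal_complement K)" and "E = cproj K"
  have "T = (\<lambda>x. T (P x) + T (E x))"
  proof
    fix x
    show "T x = T (P x) + T (E x)"
      using clinear_add[OF bounded_op_clinear[OF assms(1)], of "P x" "E x"]
      by (simp add: P_def E_def cproj_orthogonal_complement[OF K])
  qed
  moreover have "bounded_op (\<lambda>x. T (P x))" "bounded_op (\<lambda>x. T (E x))"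
    unfolding P_def E_def using bounded_op_comp[OF assms(1) bounded_op_cproj] K K_perp by blast+
  moreover have "left_regular W (\<lambda>x. T (P x))"
    unfolding left_regular_def P_def
    using mem_M_l_comp[OF assms(1) bounded_op_cproj nonneg_op_cproj qform_cproj, OF K_perp K_perp K_perp]
      abs_continuous_cproj_orthogonal_kernel[OF assms(2,3)] by (auto simp: K_def)
  moreover have "left_strongly_singular W (\<lambda>x. T (E x))"
    unfolding left_strongly_singular_def E_def
    using mem_M_l_comp[OF assms(1) bounded_op_cproj nonneg_op_cproj qform_cproj, OF K K K]
      singular_op_cproj_kernel[OF assms(2)] by (auto simp: K_def)
  ultimately show ?thesis
    by blast
qed

end
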